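(* Let $p_0,p_1:\Omega\to\mathbb{R}$ be $c$-concave functions and let $U=\{x\in\Omega:p_0(x)<p_1(x)\}$. For $y\in\Omega$ at which the maps $T_{p_0},T_{p_1}$ are defined, if $T_{p_1}(y)\in U$ then $T_{p_0}(y)\in U$.
   Context: $\Omega\subset\mathbb{R}^d$ bounded smooth domain; $c:\mathbb{R}^d\times\mathbb{R}^d\to[0,\infty)$ is symmetric, $c(x,x)=0$, $C^1_{loc}$, and for all $x_0$ the map $y\mapsto\nabla_xc(x_0,y)$ is injective. For $p:\Omega\to\mathbb{R}$, $p^c(y)=\inf_{x\in\Omega}p(x)+c(x,y)$; for $q$, $q^{\bar c}(x)=\sup_{y\in\Omega}q(y)-c(x,y)$; $p$ is $c$-concave if $p^{c\bar c}=p$. For $c$-concave $p$, $T_p(y)=\operatorname{argmin}_{x\in\Omega}\,p(x)+c(x,y)$, which is uniquely defined for a.e. $y$. *)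

theory Defs
  imports "HOL-Analysis.Analysis"
begin

fun Ck_on :: "nat \<Rightarrow> 'a::euclidean_space set \<Rightarrow> ('a \<Rightarrow> real) \<Rightarrow> bool" where
  "Ck_on 0 S f = continuous_on S f"
| "Ck_on (Suc k) S f =
     (\<exists>f'. (\<forall>x\<in>S. (f has_derivative f' x) (at x)) \<and> (\<forall>h. Ck_on k S (\<lambda>x. f' x h)))"

definition Cinf_on :: "'a::euclidean_space set \<Rightarrow> ('a \<Rightarrow> real) \<Rightarrow> bool" where
  "Cinf_on S f \<longleftrightarrow> (\<forall>k. Ck_on k S f)"

definition smooth_bounded_domain :: "'a::euclidean_space set \<Rightarrow> bool" where
  "smooth_bounded_domain \<Omega> \<longleftrightarrow>
     open \<Omega> \<and> connected \<Omega> \<and> \<Omega> \<noteq> {} \<and> bounded \<Omega> \<and>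
     (\<forall>z\<in>frontier \<Omega>. \<exists>r>0. \<exists>\<phi>. Cinf_on (ball z r) \<phi> \<and>
        (\<forall>x\<in>ball z r. \<not> (\<phi> has_derivative (\<lambda>h. 0)) (at x)) \<and>
        \<Omega> \<inter> ball z r = {x \<in> ball z r. \<phi> x < 0})"

definition grad_x :: "('a::euclidean_space \<Rightarrow> 'a \<Rightarrow> real) \<Rightarrow> 'a \<Rightarrow> 'a \<Rightarrow> 'a" where
  "grad_x c x0 y = (SOME g. ((\<lambda>x. c x y) has_derivative (\<lambda>h. g \<bullet> h)) (at x0))"

definition admissible_cost :: "('a::euclidean_space \<Rightarrow> 'a \<Rightarrow> real) \<Rightarrow> bool" where
  "admissible_cost c \<longleftrightarrow>
     (\<forall>x y. c x y \<ge> 0) \<and> (\<forall>x y. c x y = c y x) \<and> (\<forall>x. c x x = 0) \<and>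
     Ck_on 1 UNIV (\<lambda>z. c (fst z) (snd z)) \<and>
     (\<forall>x0. inj (\<lambda>y. grad_x c x0 y))"

definition c_transform :: "('a \<Rightarrow> 'a \<Rightarrow> real) \<Rightarrow> 'a set \<Rightarrow> ('a \<Rightarrow> real) \<Rightarrow> 'a \<Rightarrow> real" where
  "c_transform c \<Omega> p y = (INF x\<in>\<Omega>. p x + c x y)"

definition cbar_transform :: "('a \<Rightarrow> 'a \<Rightarrow> real) \<Rightarrow> 'a set \<Rightarrow> ('a \<Rightarrow> real) \<Rightarrow> 'a \<Rightarrow> real" where
  "cbar_transform c \<Omega> q x = (SUP y\<in>\<Omega>. q y - c x y)"

text \<open>c-concavity: p^c is real-valued (the infima are finite), p^{c cbar} is real-valued,
  and p^{c cbar} = p on \<Omega>.\<close>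
definition c_concave :: "('a \<Rightarrow> 'a \<Rightarrow> real) \<Rightarrow> 'a set \<Rightarrow> ('a \<Rightarrow> real) \<Rightarrow> bool" where
  "c_concave c \<Omega> p \<longleftrightarrow>
     (\<forall>y\<in>\<Omega>. bdd_below ((\<lambda>x. p x + c x y) ` \<Omega>)) \<and>
     (\<forall>x\<in>\<Omega>. bdd_above ((\<lambda>y. c_transform c \<Omega> p y - c x y) ` \<Omega>)) \<and>
     (\<forall>x\<in>\<Omega>. cbar_transform c \<Omega> (c_transform c \<Omega> p) x = p x)"

definition is_argmin_T :: "('a \<Rightarrow> 'a \<Rightarrow> real) \<Rightarrow> 'a set \<Rightarrow> ('a \<Rightarrow> real) \<Rightarrow> 'a \<Rightarrow> 'a \<Rightarrow> bool" where
  "is_argmin_T c \<Omega> p y x \<longleftrightarrow> x \<in> \<Omega> \<and> (\<forall>x'\<in>\<Omega>. p x + c x y \<le> p x' + c x' y)"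

definition T_defined :: "('a \<Rightarrow> 'a \<Rightarrow> real) \<Rightarrow> 'a set \<Rightarrow> ('a \<Rightarrow> real) \<Rightarrow> 'a \<Rightarrow> bool" where
  "T_defined c \<Omega> p y \<longleftrightarrow> (\<exists>!x. is_argmin_T c \<Omega> p y x)"

definition T_map :: "('a \<Rightarrow> 'a \<Rightarrow> real) \<Rightarrow> 'a set \<Rightarrow> ('a \<Rightarrow> real) \<Rightarrow> 'a \<Rightarrow> 'a" where
  "T_map c \<Omega> p y = (THE x. is_argmin_T c \<Omega> p y x)"

end

theory Submission
  imports Defs
begin

text \<open>If x0 minimises p0 + c(., y) and x1 minimises p1 + c(., y), adding the two minimality
  inequalities cancels the cost terms and gives p0 x0 - p1 x0 \<le> p0 x1 - p1 x1. Hence the sign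
  of p0 - p1 at T_p1(y) propagates to T_p0(y).\<close>

lemma T_map_is_argmin:
  assumes "T_defined c \<Omega> p y"
  shows "is_argmin_T c \<Omega> p y (T_map c \<Omega> p y)"
  using assms unfolding T_defined_def T_map_def by (rule theI')

lemma argmin_diff_le:
  assumes "is_argmin_T c \<Omega> p0 y x0" and "is_argmin_T c \<Omega> p1 y x1"
  shows "p0 x0 - p1 x0 \<le> p0 x1 - p1 x1"
proof -
  have "p0 x0 + c x0 y \<le> p0 x1 + c x1 y"
    using assms unfolding is_argmin_T_def by blast
  moreover have "p1 x1 + c x1 y \<le> p1 x0 + c x0 y"
    using assms unfolding is_argmin_T_def by blast
  ultimately show ?thesis by linarith
qed

theorem lemma4p1:
  fixes \<Omega> :: "'a::euclidean_space set"
    and c :: "'a \<Rightarrow> 'a \<Rightarrow> real"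
    and p0 p1 :: "'a \<Rightarrow> real"
    and y :: 'a
  assumes "smooth_bounded_domain \<Omega>"
    and "admissible_cost c"
    and "c_concave c \<Omega> p0"
    and "c_concave c \<Omega> p1"
    and "y \<in> \<Omega>"
    and "T_defined c \<Omega> p0 y"
    and "T_defined c \<Omega> p1 y"
    and "T_map c \<Omega> p1 y \<in> {x \<in> \<Omega>. p0 x < p1 x}"
  shows "T_map c \<Omega> p0 y \<in> {x \<in> \<Omega>. p0 x < p1 x}"
proof -
  have argmin0: "is_argmin_T c \<Omega> p0 y (T_map c \<Omega> p0 y)"
    using assms(6) by (rule T_map_is_argmin)
  have argmin1: "is_argmin_T c \<Omega> p1 y (T_map c \<Omega> p1 y)"
    using assms(7) by (rule T_map_is_argmin)
  have "T_map c \<Omega> p0 y \<in> \<Omega>"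
    using argmin0 unfolding is_argmin_T_def by blast
  moreover have "p0 (T_map c \<Omega> p0 y) - p1 (T_map c \<Omega> p0 y)
      \<le> p0 (T_map c \<Omega> p1 y) - p1 (T_map c \<Omega> p1 y)"
    using argmin0 argmin1 by (rule argmin_diff_le)
  ultimately show ?thesis
    using assms(8) by auto
qed

end
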